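(* For $n\ge2$, \[M_n(x)=2\sum_{T\in\widetilde{\mathcal{HR}}_n}x^{\min(T)+1},\] where $M_n(x)=2\sum_{k=1}^{\ell}d_{n,k-1}x^k(1+x)^{\ell-k}$ with $\ell=\lfloor (n+1)/2\rfloor$ (so that $R_n(x)=(1+x)^{\lfloor (n-2)/2\rfloor}M_n(x)$), and $\min(T)$ denotes the number of inner nodes of $T$ that are min-nodes.
   Context: All trees are rooted binary trees in which each child is designated left or right. A min–max tree on a totally ordered label set is such a tree labeled bijectively so that each node's label is the minimum or maximum of the labels of its subtree. A node with at least one child is inner; an inner node is a min-node (resp. max-node) if its label is the minimum (resp. maximum) of its subtree. An HR-tree is a min–max tree in which every inner node $s$ has a nonempty right subtree containing the maximum label of the subtree of $s$ if $s$ is a min-node and the minimum label if $s$ is a max-node (so every node with exactly one child has only a right child). The reading word $w(T)$ is the in-order reading $w(T)=w(L)\,\ell_{\mathrm{root}}\,w(R)$. $\mathcal{HR}_n$ is the set of HR-trees labeled by $[n]$; $w$ is a bijection $\mathcal{HR}_n\to\mathfrak S_n$. For $T\in\mathcal{HR}_n$ with $w(T)=\pi$, list the nodes having exactly one child by increasing position of their labels in $\pi$; the $k$-th in this list is called an odd or even one-child node according to the parity of $k$. $\widetilde{\mathcal{HR}}_n$ is the set of $T\in\mathcal{HR}_n$ such that every node with two children is a min-node and every min-node with exactly one child is an even one-child node. A descent of $\pi$ is $i\in[n-1]$ with $\pi_i>\pi_{i+1}$. For an index $i$, the $\pi_i$-factorization is $\pi=w_1w_2\pi_iw_4w_5$ where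 $w_2$ is the longest factor ending at position $i-1$ with all letters $>\pi_i$ and $w_4$ the longest factor starting at position $i+1$ with all letters $>\pi_i$. $\pi\in\mathfrak S_n$ is an André permutation if no $i\in\{2,\dots,n-1\}$ has $\pi_{i-1}>\pi_i>\pi_{i+1}$, $\pi_{n-1}<\pi_n$, and for every $i\in\{2,\dots,n-1\}$ with $\pi_{i-1}>\pi_i<\pi_{i+1}$, $\max(w_2)<\max(w_4)$. $d_{n,i}$ is the number of André permutations in $\mathfrak S_n$ with $i$ descents; $R_n(x)=\sum_{\pi\in\mathfrak S_n}x^{\mathrm{run}(\pi)}$ with $\mathrm{run}(\pi)$ one plus the number of peaks and valleys of $\pi$. *)

theory Defs
  imports "HOL-Library.Tree" "HOL-Combinatorics.Multiset_Permutations"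
          "HOL-Computational_Algebra.Polynomial"
begin

definition is_min_node :: "nat tree \<Rightarrow> bool" where
  "is_min_node s = (s \<noteq> Leaf \<and> value s = Min (set_tree s))"

definition is_max_node :: "nat tree \<Rightarrow> bool" where
  "is_max_node s = (s \<noteq> Leaf \<and> value s = Max (set_tree s))"

definition is_inner :: "nat tree \<Rightarrow> bool" where
  "is_inner s = (s \<noteq> Leaf \<and> (left s \<noteq> Leaf \<or> right s \<noteq> Leaf))"

definition nodes :: "nat tree \<Rightarrow> nat tree set" where
  "nodes t = subtrees t - {Leaf}"

definition min_max_tree :: "nat tree \<Rightarrow> bool" where
  "min_max_tree t = (\<forall>s\<in>nodes t. is_min_node s \<or> is_max_node s)"

definition HR_tree :: "nat tree \<Rightarrow> bool" where
  "HR_tree t = (min_max_tree t \<and>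
     (\<forall>s\<in>nodes t. is_inner s \<longrightarrow>
        right s \<noteq> Leaf \<and>
        (is_min_node s \<longrightarrow> Max (set_tree s) \<in> set_tree (right s)) \<and>
        (is_max_node s \<longrightarrow> Min (set_tree s) \<in> set_tree (right s))))"

definition HR :: "nat \<Rightarrow> nat tree set" where
  "HR n = {t. HR_tree t \<and> distinct (inorder t) \<and> set (inorder t) = {1..n}}"

definition one_child :: "nat tree \<Rightarrow> bool" where
  "one_child s = (s \<noteq> Leaf \<and> (left s = Leaf) \<noteq> (right s = Leaf))"

(* labels of one-child nodes, listed by increasing position in w(T) *)
definition one_child_list :: "nat tree \<Rightarrow> nat list" where
  "one_child_list t =
     filter (\<lambda>a. \<exists>s\<in>nodes t. one_child s \<and> value s = a) (inorder t)"

definition even_one_child :: "nat tree \<Rightarrow> nat \<Rightarrow> bool" where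
  "even_one_child t a =
     (\<exists>k. 1 \<le> k \<and> k \<le> length (one_child_list t) \<and> even k
          \<and> one_child_list t ! (k - 1) = a)"

definition HR_tilde :: "nat \<Rightarrow> nat tree set" where
  "HR_tilde n = {t \<in> HR n.
     (\<forall>s\<in>nodes t. left s \<noteq> Leaf \<and> right s \<noteq> Leaf \<longrightarrow> is_min_node s) \<and>
     (\<forall>s\<in>nodes t. is_min_node s \<and> one_child s \<longrightarrow> even_one_child t (value s))}"

definition min_count :: "nat tree \<Rightarrow> nat" where
  "min_count t = card {s\<in>nodes t. is_inner s \<and> is_min_node s}"

(* permutations as words; p \<pi> i is the 1-indexed letter \<pi>_i *)
definition p :: "nat list \<Rightarrow> nat \<Rightarrow> nat" where
  "p \<pi> i = \<pi> ! (i - 1)"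

definition descents :: "nat list \<Rightarrow> nat" where
  "descents \<pi> = card {i\<in>{1..<length \<pi>}. p \<pi> i > p \<pi> (i + 1)}"

definition w2_set :: "nat list \<Rightarrow> nat \<Rightarrow> nat set" where
  "w2_set \<pi> i = {p \<pi> j | j. 1 \<le> j \<and> j < i \<and> (\<forall>k\<in>{j..<i}. p \<pi> k > p \<pi> i)}"

definition w4_set :: "nat list \<Rightarrow> nat \<Rightarrow> nat set" where
  "w4_set \<pi> i = {p \<pi> j | j. i < j \<and> j \<le> length \<pi> \<and> (\<forall>k\<in>{i<..j}. p \<pi> k > p \<pi> i)}"

definition andre :: "nat list \<Rightarrow> bool" where
  "andre \<pi> = (let n = length \<pi> in
     (\<nexists>i. 2 \<le> i \<and> i \<le> n - 1 \<and> p \<pi> (i - 1) > p \<pi> i \<and> p \<pi> i > p \<pi> (i + 1)) \<and>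
     p \<pi> (n - 1) < p \<pi> n \<and>
     (\<forall>i. 2 \<le> i \<and> i \<le> n - 1 \<and> p \<pi> (i - 1) > p \<pi> i \<and> p \<pi> i < p \<pi> (i + 1)
          \<longrightarrow> Max (w2_set \<pi> i) < Max (w4_set \<pi> i)))"

definition d :: "nat \<Rightarrow> nat \<Rightarrow> nat" where
  "d n i = card {\<pi> \<in> permutations_of_set {1..n}. andre \<pi> \<and> descents \<pi> = i}"

definition M :: "nat \<Rightarrow> int poly" where
  "M n = (let l = (n + 1) div 2 in
     2 * (\<Sum>k = 1..l. smult (int (d n (k - 1))) ([:0, 1:] ^ k * [:1, 1:] ^ (l - k))))"

end

theory Submission
  imports Defs
begin

text \<open>
  Splitting an Andre permutation at its smallest letter, \<open>\<pi> = u m v\<close>, leaves Andre permutations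
  \<open>u\<close> and \<open>v\<close> with \<open>max u < max v\<close>, and \<open>\<pi>\<close> has one descent more than \<open>u\<close> and \<open>v\<close> together
  exactly when \<open>u\<close> is nonempty. Hence the descent polynomials of Andre permutations satisfy
  \<open>A(n+2) = A(n+1) + t \<Sum>j=1..n. (n choose j) A(j) A(n+1-j)\<close>.
  Likewise the root of a tree in \<open>HR_tilde\<close> carries either the largest label, with empty left
  subtree, or the smallest label; removing it gives a recursion for the min-node polynomials
  \<open>G(n, b)\<close>, where \<open>b\<close> is the parity of the number of one-child nodes read before the subtree.
  The two recursions are related by the substitution \<open>t = x / (1 + x)\<close>:
  \<open>G(n, b)(x) = (1 + x)\<^sup>e A(n)(x / (1 + x))\<close> with \<open>e = \<lfloor>n/2\<rfloor>\<close> or \<open>\<lfloor>(n-1)/2\<rfloor>\<close>,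
  and comparing coefficients with the definition of \<open>M n\<close> gives \<open>M n = 2 x G(n, False)\<close>.
\<close>

lemma Min_less_Max:
  fixes S :: "'a::linorder set"
  assumes "finite S" "2 \<le> card S"
  shows "Min S < Max S"
proof -
  obtain a b where "a \<in> S" "b \<in> S" "a \<noteq> b"
    using assms card_le_Suc0_iff_eq[OF assms(1)] by auto
  moreover have "Min S \<le> x" "x \<le> Max S" if "x \<in> S" for x
    using assms(1) that by auto
  ultimately show ?thesis
    by (metis antisym not_less order_trans)
qed

lemma Min_Max_mem:
  assumes "finite S" "2 \<le> card S"
  shows "Min S \<in> S" "Max S \<in> S - {Min S}"
proof -
  have "S \<noteq> {}"
    using assms(2) by auto
  thus "Min S \<in> S" "Max S \<in> S - {Min S}"
    using assms(1) Min_less_Max[OF assms] by auto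
qed

lemma Min_less_Diff_Min: "finite S \<Longrightarrow> x \<in> S - {Min S} \<Longrightarrow> Min S < x"
  by (auto intro: le_neq_trans)

lemma Max_Diff_Min:
  assumes "finite S" "2 \<le> card S"
  shows "Max (S - {Min S}) = Max S"
  using Min_Max_mem[OF assms] assms(1) by (intro Max_eqI) auto

lemma card_ge_2_induct [consumes 1, case_names empty singleton card_ge_2]:
  assumes "finite S" and "P {}" and "\<And>a. P {a}"
    and step: "\<And>S. finite S \<Longrightarrow> 2 \<le> card S \<Longrightarrow> (\<And>U. U \<subset> S \<Longrightarrow> P U) \<Longrightarrow> P S"
  shows "P S"
  using assms(1)
proof (induction "card S" arbitrary: S rule: less_induct)
  case less
  consider "card S = 0" | "card S = 1" | "2 \<le> card S"
    by linarith
  thus ?case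
  proof cases
    case 3
    show ?thesis
    proof (rule step[OF less.prems 3])
      fix U assume "U \<subset> S"
      moreover from this have "finite U"
        using finite_subset[OF psubset_imp_subset less.prems] by blast
      ultimately show "P U"
        using less.hyps less.prems psubset_card_mono by blast
    qed
  qed (use less.prems assms(2,3) in \<open>auto simp: card_1_singleton_iff\<close>)
qed

lemma sum_nonempty_subsets_by_card:
  assumes "finite A" and H: "\<And>U. U \<subseteq> A \<Longrightarrow> U \<noteq> {} \<Longrightarrow> H U = h (card U)"
  shows "(\<Sum>U | U \<subseteq> A \<and> U \<noteq> {}. H U) = (\<Sum>j=1..card A. of_nat (card A choose j) * h j)"
proof -
  have "(\<Sum>U | U \<subseteq> A \<and> U \<noteq> {}. H U) = (\<Sum>j=1..card A. \<Sum>U | U \<subseteq> A \<and> U \<noteq> {} \<and> card U = j. H U)"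
    using assms(1)
    by (subst sum.group[symmetric, where g = card]) (auto simp: Suc_le_eq card_gt_0_iff card_mono dest: finite_subset)
  also have "\<dots> = (\<Sum>j=1..card A. of_nat (card A choose j) * h j)"
  proof (rule sum.cong[OF refl])
    fix j :: nat assume "j \<in> {1..card A}"
    hence "{U. U \<subseteq> A \<and> U \<noteq> {} \<and> card U = j} = {U. U \<subseteq> A \<and> card U = j}"
      by auto
    moreover have "(\<Sum>U | U \<subseteq> A \<and> U \<noteq> {} \<and> card U = j. H U) = (\<Sum>U | U \<subseteq> A \<and> U \<noteq> {} \<and> card U = j. h j)"
      using H by (intro sum.cong) auto
    ultimately show "(\<Sum>U | U \<subseteq> A \<and> U \<noteq> {} \<and> card U = j. H U) = of_nat (card A choose j) * h j"
      using n_subsets[OF assms(1), of j] by simp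
  qed
  finally show ?thesis .
qed

section \<open>Two polynomial recursions related by \<open>t = x / (1 + x)\<close>\<close>

definition poly_real :: "int poly \<Rightarrow> real \<Rightarrow> real" where
  "poly_real P = poly (map_poly real_of_int P)"

lemma poly_real_add [simp]: "poly_real (P + Q) x = poly_real P x + poly_real Q x"
proof -
  have "map_poly real_of_int (P + Q) = map_poly real_of_int P + map_poly real_of_int Q"
    by (rule poly_eqI) (simp add: coeff_map_poly)
  thus ?thesis by (simp add: poly_real_def)
qed

lemma poly_real_diff [simp]: "poly_real (P - Q) x = poly_real P x - poly_real Q x"
proof -
  have "map_poly real_of_int (P - Q) = map_poly real_of_int P - map_poly real_of_int Q"
    by (rule poly_eqI) (simp add: coeff_map_poly)
  thus ?thesis by (simp add: poly_real_def)
qed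

lemma poly_real_mult [simp]: "poly_real (P * Q) x = poly_real P x * poly_real Q x"
proof -
  have "map_poly real_of_int (P * Q) = map_poly real_of_int P * map_poly real_of_int Q"
    by (rule poly_eqI) (simp add: coeff_map_poly coeff_mult)
  thus ?thesis by (simp add: poly_real_def)
qed

lemma poly_real_0 [simp]: "poly_real 0 x = 0"
  and poly_real_1 [simp]: "poly_real 1 x = 1"
  and poly_real_pCons [simp]: "poly_real (pCons c P) x = real_of_int c + x * poly_real P x"
  and poly_real_smult [simp]: "poly_real (smult c P) x = real_of_int c * poly_real P x"
  by (simp_all add: poly_real_def map_poly_pCons map_poly_smult)

lemma poly_real_sum [simp]: "poly_real (\<Sum>i\<in>A. f i) x = (\<Sum>i\<in>A. poly_real (f i) x)"
  by (induction A rule: infinite_finite_induct) auto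

lemma poly_real_power [simp]: "poly_real (P ^ k) x = poly_real P x ^ k"
  by (induction k) auto

lemma poly_real_of_nat [simp]: "poly_real (of_nat k) x = real k"
  by (induction k) auto

lemma poly_real_as_sum:
  assumes "degree P \<le> e"
  shows "poly_real P x = (\<Sum>i\<le>e. real_of_int (coeff P i) * x ^ i)"
proof -
  have "poly_real P x = (\<Sum>i\<le>degree P. real_of_int (coeff P i) * x ^ i)"
    by (simp add: poly_real_def poly_altdef coeff_map_poly degree_map_poly)
  also have "\<dots> = (\<Sum>i\<le>e. real_of_int (coeff P i) * x ^ i)"
    using assms by (intro sum.mono_neutral_left) (auto simp: coeff_eq_0)
  finally show ?thesis .
qed

lemma poly_real_eqI:
  assumes "\<And>x. x \<noteq> -1 \<Longrightarrow> poly_real P x = poly_real Q x"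
  shows "P = Q"
proof -
  let ?R = "map_poly real_of_int (P - Q)"
  have "?R = 0"
  proof (rule ccontr)
    assume "?R \<noteq> 0"
    hence "finite {x. poly ?R x = 0}"
      by (rule poly_roots_finite)
    moreover have "UNIV - {-1} \<subseteq> {x. poly ?R x = 0}"
      using assms by (auto simp flip: poly_real_def)
    ultimately have "finite (UNIV - {-1 :: real})"
      by (rule finite_subset[rotated])
    thus False
      by (simp add: infinite_UNIV_char_0)
  qed
  thus ?thesis
    by (simp add: map_poly_eq_0_iff)
qed

definition homogenize :: "nat \<Rightarrow> int poly \<Rightarrow> int poly" where
  "homogenize e P = (\<Sum>i\<le>e. smult (coeff P i) ([:0, 1:] ^ i * [:1, 1:] ^ (e - i)))"

lemma poly_real_homogenize:
  assumes "degree P \<le> e" "x \<noteq> -1"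
  shows "poly_real (homogenize e P) x = (1 + x) ^ e * poly_real P (x / (1 + x))"
proof -
  define s where "s = 1 + x"
  have "s \<noteq> 0"
    using assms by (auto simp: s_def)
  have "x ^ i * s ^ (e - i) = s ^ e * (x / s) ^ i" if "i \<le> e" for i
  proof -
    have "s ^ e = s ^ i * s ^ (e - i)"
      using that by (simp flip: power_add)
    thus ?thesis
      using \<open>s \<noteq> 0\<close> by (simp add: power_divide)
  qed
  hence "poly_real (homogenize e P) x = s ^ e * (\<Sum>i\<le>e. real_of_int (coeff P i) * (x / s) ^ i)"
    by (simp add: homogenize_def s_def sum_distrib_left algebra_simps)
  thus ?thesis
    using assms by (simp add: poly_real_as_sum s_def)
qed

fun andre_poly :: "nat \<Rightarrow> int poly" where
  "andre_poly 0 = 1"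
| "andre_poly (Suc 0) = 1"
| "andre_poly (Suc (Suc n)) = andre_poly (Suc n)
     + [:0, 1:] * (\<Sum>j=1..n. of_nat (n choose j) * andre_poly j * andre_poly (Suc n - j))"

fun hr_poly :: "nat \<Rightarrow> bool \<Rightarrow> int poly" where
  "hr_poly 0 b = 1"
| "hr_poly (Suc 0) b = 1"
| "hr_poly (Suc (Suc n)) b = hr_poly (Suc n) (\<not> b) + (if b then [:0, 1:] * hr_poly (Suc n) False else 0)
     + [:0, 1:] * (\<Sum>j=1..n. of_nat (n choose j) * hr_poly j b * hr_poly (Suc n - j) (b \<noteq> even j))"

definition hr_exp :: "nat \<Rightarrow> bool \<Rightarrow> nat" where
  "hr_exp n b = (if b then n div 2 else (n - 1) div 2)"

lemma hr_exp_Suc_Suc: "hr_exp (Suc (Suc n)) b = hr_exp (Suc n) (\<not> b) + (if b then 1 else 0)"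
  by (auto simp: hr_exp_def)

lemma hr_exp_add:
  assumes "1 \<le> j" "1 \<le> k"
  shows "hr_exp j b + hr_exp k (b \<noteq> even j) + 1 = hr_exp (Suc (j + k)) b"
  using assms unfolding hr_exp_def
  by (cases b; cases "even j"; cases "even k") (auto elim!: evenE oddE)

lemma degree_andre_poly: "degree (andre_poly n) \<le> (n - 1) div 2"
proof (induction n rule: andre_poly.induct)
  case (3 n)
  let ?S = "\<Sum>j=1..n. of_nat (n choose j) * andre_poly j * andre_poly (Suc n - j)"
  have "degree (of_nat (n choose j) * andre_poly j * andre_poly (Suc n - j)) \<le> (n - 1) div 2"
    if j: "j \<in> {1..n}" for j
  proof -
    have "degree (of_nat (n choose j) * andre_poly j * andre_poly (Suc n - j))
        \<le> degree (andre_poly j) + degree (andre_poly (Suc n - j))"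
      by (metis add_0 add_le_mono1 degree_mult_le degree_of_nat order_trans)
    also have "\<dots> \<le> (j - 1) div 2 + (n - j) div 2"
      using "3.IH"(2,3)[OF j] j by (intro add_mono) auto
    also have "\<dots> \<le> (n - 1) div 2"
      using j by (cases "even j"; cases "even n") (auto elim!: evenE oddE)
    finally show ?thesis .
  qed
  hence "degree ?S \<le> (n - 1) div 2"
    by (intro degree_sum_le) auto
  hence "degree ([:0, 1:] * ?S) \<le> Suc n div 2"
    using degree_mult_le[of "[:0, 1:]" ?S] by (cases n) auto
  moreover have "degree (andre_poly (Suc n)) \<le> Suc n div 2"
    using "3.IH"(1) by (simp add: div_le_mono)
  ultimately show ?case
    by (simp add: degree_add_le)
qed auto

lemma poly_real_hr_poly:
  assumes "x \<noteq> -1"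
  shows "poly_real (hr_poly n b) x = (1 + x) ^ hr_exp n b * poly_real (andre_poly n) (x / (1 + x))"
proof (induction n b rule: hr_poly.induct)
  case (3 n b)
  define s where "s = 1 + x"
  define y where "y = x / s"
  have x_eq: "x = s * y"
    using assms by (simp add: s_def y_def)
  let ?E = "hr_exp (Suc (Suc n)) b"
  let ?A = "\<lambda>j. poly_real (andre_poly j) y"
  have head: "poly_real (hr_poly (Suc n) (\<not> b)) x + (if b then x * poly_real (hr_poly (Suc n) False) x else 0)
      = s ^ ?E * ?A (Suc n)"
    using "3.IH"(1,2) by (cases b) (simp_all add: hr_exp_Suc_Suc s_def y_def algebra_simps)
  have summand: "x * (real (n choose j) * poly_real (hr_poly j b) x * poly_real (hr_poly (Suc n - j) (b \<noteq> even j)) x)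
      = s ^ ?E * (y * (real (n choose j) * ?A j * ?A (Suc n - j)))" if "j \<in> {1..n}" for j
  proof -
    have "?E = Suc (hr_exp j b + hr_exp (Suc n - j) (b \<noteq> even j))"
      using hr_exp_add[of j "Suc n - j" b] that by auto
    moreover note "3.IH"(3,4)[OF that, folded s_def, folded y_def]
    ultimately show ?thesis
      by (subst (1) x_eq) (simp add: power_add algebra_simps)
  qed
  have "poly_real (hr_poly (Suc (Suc n)) b) x
      = (poly_real (hr_poly (Suc n) (\<not> b)) x + (if b then x * poly_real (hr_poly (Suc n) False) x else 0))
        + (\<Sum>j=1..n. x * (real (n choose j) * poly_real (hr_poly j b) x
                             * poly_real (hr_poly (Suc n - j) (b \<noteq> even j)) x))"
    by (simp add: sum_distrib_left)
  also have "\<dots> = s ^ ?E * ?A (Suc n) + (\<Sum>j=1..n. s ^ ?E * (y * (real (n choose j) * ?A j * ?A (Suc n - j))))"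
    by (simp only: head sum.cong[OF refl summand])
  also have "\<dots> = s ^ ?E * ?A (Suc (Suc n))"
    by (simp add: sum_distrib_left algebra_simps)
  finally show ?case
    by (simp add: s_def y_def)
qed (auto simp: hr_exp_def)

lemma hr_poly_eq_homogenize: "hr_poly n b = homogenize (hr_exp n b) (andre_poly n)"
proof (rule poly_real_eqI)
  have "degree (andre_poly n) \<le> hr_exp n b"
    using degree_andre_poly[of n] by (auto simp: hr_exp_def intro: order_trans div_le_mono)
  thus "poly_real (hr_poly n b) x = poly_real (homogenize (hr_exp n b) (andre_poly n)) x"
    if "x \<noteq> -1" for x
    using that by (simp add: poly_real_hr_poly poly_real_homogenize)
qed

section \<open>Andre permutations\<close>

lemma p_append_left: "1 \<le> i \<Longrightarrow> i \<le> length xs \<Longrightarrow> p (xs @ ys) i = p xs i"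
  by (auto simp: p_def nth_append)

lemma p_append_right: "1 \<le> i \<Longrightarrow> p (xs @ ys) (length xs + i) = p ys i"
  by (auto simp: p_def nth_append)

lemma p_at_middle: "p (xs @ a # ys) (Suc (length xs)) = a"
  by (simp add: p_def)

lemma p_append_Cons_right: "1 \<le> i \<Longrightarrow> p (xs @ a # ys) (Suc (length xs) + i) = p ys i"
  using p_append_right[of i "xs @ [a]" ys] by simp

lemma p_in_set: "1 \<le> i \<Longrightarrow> i \<le> length w \<Longrightarrow> p w i \<in> set w"
  by (simp add: p_def)

lemma set_takeWhile_conv_nth:
  "set (takeWhile P zs) = {zs ! j | j. j < length zs \<and> (\<forall>k\<le>j. P (zs ! k))}"
proof -
  have len: "j < length (takeWhile P zs) \<longleftrightarrow> j < length zs \<and> (\<forall>k\<le>j. P (zs ! k))" for j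
  proof
    assume j: "j < length (takeWhile P zs)"
    have "P (zs ! k)" if "k \<le> j" for k
      using that j set_takeWhileD[OF nth_mem[of k "takeWhile P zs"]] by (simp add: takeWhile_nth)
    thus "j < length zs \<and> (\<forall>k\<le>j. P (zs ! k))"
      using j length_takeWhile_le[of P zs] by auto
  qed (use length_takeWhile_less_P_nth[of "Suc j" P zs] in auto)
  have "set (takeWhile P zs) = {zs ! j | j. j < length (takeWhile P zs)}"
    by (force simp: set_conv_nth takeWhile_nth)
  thus ?thesis
    by (simp only: len)
qed

text \<open>These are the paper's definitions of \<open>w\<^sub>2\<close> and \<open>w\<^sub>4\<close>: the longest factor ending at
  position \<open>i - 1\<close>, resp. starting at position \<open>i + 1\<close>, whose letters all exceed \<open>\<pi>\<^sub>i\<close>.\<close>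

lemma w4_set_conv_takeWhile:
  assumes "1 \<le> i"
  shows "w4_set w i = set (takeWhile (\<lambda>x. p w i < x) (drop i w))"
proof -
  have "w4_set w i = {drop i w ! j | j. j < length (drop i w) \<and> (\<forall>k\<le>j. p w i < drop i w ! k)}"
  proof (intro set_eqI iffI)
    fix x assume "x \<in> w4_set w i"
    then obtain j where j: "x = p w j" "i < j" "j \<le> length w" "\<forall>k\<in>{i<..j}. p w i < p w k"
      by (auto simp: w4_set_def)
    have "\<forall>k\<le>j - i - 1. p w i < drop i w ! k"
    proof (intro allI impI)
      fix k assume "k \<le> j - i - 1"
      hence "p w i < p w (Suc (i + k))"
        using j by auto
      thus "p w i < drop i w ! k"
        using j by (simp add: p_def)
    qed
    moreover have "x = drop i w ! (j - i - 1)"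
      using j assms by (simp add: p_def)
    ultimately show "x \<in> {drop i w ! j | j. j < length (drop i w) \<and> (\<forall>k\<le>j. p w i < drop i w ! k)}"
      using j by (intro CollectI exI[of _ "j - i - 1"]) auto
  next
    fix x assume "x \<in> {drop i w ! j | j. j < length (drop i w) \<and> (\<forall>k\<le>j. p w i < drop i w ! k)}"
    then obtain j where j: "x = drop i w ! j" "j < length w - i" "\<forall>k\<le>j. p w i < drop i w ! k"
      by auto
    have "\<forall>k\<in>{i<..Suc (i + j)}. p w i < p w k"
    proof
      fix k assume "k \<in> {i<..Suc (i + j)}"
      hence "k - Suc i \<le> j" "i + (k - Suc i) = k - 1" by auto
      thus "p w i < p w k"
        using j(2) spec[OF j(3), of "k - Suc i"] by (simp add: p_def)
    qed
    thus "x \<in> w4_set w i"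
      using j unfolding w4_set_def by (intro CollectI exI[of _ "Suc (i + j)"]) (auto simp: p_def)
  qed
  thus ?thesis
    by (simp only: set_takeWhile_conv_nth)
qed

lemma w2_set_conv_takeWhile:
  assumes "i \<le> length w"
  shows "w2_set w i = set (takeWhile (\<lambda>x. p w i < x) (rev (take (i - 1) w)))"
proof -
  let ?zs = "rev (take (i - 1) w)"
  have zs_nth: "?zs ! j = p w (i - 1 - j)" if "j < i - 1" for j
    using that assms by (simp add: rev_nth p_def)
  have "w2_set w i = {?zs ! j | j. j < length ?zs \<and> (\<forall>k\<le>j. p w i < ?zs ! k)}"
  proof (intro set_eqI iffI)
    fix x assume "x \<in> w2_set w i"
    then obtain j where j: "x = p w j" "1 \<le> j" "j < i" "\<forall>k\<in>{j..<i}. p w i < p w k"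
      by (auto simp: w2_set_def)
    have "\<forall>k\<le>i - 1 - j. p w i < ?zs ! k"
    proof (intro allI impI)
      fix k assume "k \<le> i - 1 - j"
      hence "k < i - 1" "i - 1 - k \<in> {j..<i}"
        using j by auto
      thus "p w i < ?zs ! k"
        using j(4) zs_nth by auto
    qed
    moreover have "x = ?zs ! (i - 1 - j)"
      using j zs_nth[of "i - 1 - j"] by simp
    ultimately show "x \<in> {?zs ! j | j. j < length ?zs \<and> (\<forall>k\<le>j. p w i < ?zs ! k)}"
      using j assms by (intro CollectI exI[of _ "i - 1 - j"]) auto
  next
    fix x assume "x \<in> {?zs ! j | j. j < length ?zs \<and> (\<forall>k\<le>j. p w i < ?zs ! k)}"
    then obtain j where j: "x = ?zs ! j" "j < i - 1" "\<forall>k\<le>j. p w i < ?zs ! k"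
      using assms by auto
    have "\<forall>k\<in>{i - 1 - j..<i}. p w i < p w k"
    proof
      fix k assume "k \<in> {i - 1 - j..<i}"
      hence "i - 1 - k \<le> j" "i - 1 - (i - 1 - k) = k" by auto
      thus "p w i < p w k"
        using j zs_nth[of "i - 1 - k"] by force
    qed
    thus "x \<in> w2_set w i"
      using j zs_nth[of j] unfolding w2_set_def by (intro CollectI exI[of _ "i - 1 - j"]) auto
  qed
  thus ?thesis
    by (simp only: set_takeWhile_conv_nth)
qed

lemma w2_set_append_left:
  assumes "1 \<le> i" "i \<le> length xs"
  shows "w2_set (xs @ ys) i = w2_set xs i"
  using assms by (simp add: w2_set_conv_takeWhile p_append_left)

lemma w4_set_append_right:
  assumes "1 \<le> i"
  shows "w4_set (xs @ ys) (length xs + i) = w4_set ys i"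
  using assms by (simp add: w4_set_conv_takeWhile p_append_right)

lemma w4_set_append_left:
  assumes "1 \<le> i" "i \<le> length xs" "a < p xs i"
  shows "w4_set (xs @ a # ys) i = w4_set xs i"
  using assms by (simp add: w4_set_conv_takeWhile p_append_left takeWhile_tail)

lemma w2_set_append_right:
  assumes "1 \<le> i" "i \<le> length ys" "a < p ys i"
  shows "w2_set (xs @ a # ys) (Suc (length xs) + i) = w2_set ys i"
proof -
  have "p (xs @ a # ys) (Suc (length xs) + i) = p ys i"
    using p_append_right[of i "xs @ [a]" ys] assms by simp
  moreover have "take (Suc (length xs) + i - 1) (xs @ a # ys) = xs @ a # take (i - 1) ys"
    using assms by (simp add: take_append take_Cons')
  ultimately show ?thesis
    using assms by (simp add: w2_set_conv_takeWhile takeWhile_tail)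
qed

lemma w2_set_at_smaller:
  assumes "\<forall>x\<in>set xs. a < x"
  shows "w2_set (xs @ a # ys) (Suc (length xs)) = set xs"
  using assms by (simp add: w2_set_conv_takeWhile p_def takeWhile_eq_all_conv[THEN iffD2])

lemma w4_set_at_smaller:
  assumes "\<forall>x\<in>set ys. a < x"
  shows "w4_set (xs @ a # ys) (Suc (length xs)) = set ys"
  using assms by (simp add: w4_set_conv_takeWhile p_def takeWhile_eq_all_conv[THEN iffD2])

definition double_descent :: "nat list \<Rightarrow> nat \<Rightarrow> bool" where
  "double_descent w i \<longleftrightarrow> 2 \<le> i \<and> i \<le> length w - 1 \<and> p w (i - 1) > p w i \<and> p w i > p w (i + 1)"

definition bad_valley :: "nat list \<Rightarrow> nat \<Rightarrow> bool" where
  "bad_valley w i \<longleftrightarrow> 2 \<le> i \<and> i \<le> length w - 1 \<and> p w (i - 1) > p w i \<and> p w i < p w (i + 1)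
     \<and> \<not> Max (w2_set w i) < Max (w4_set w i)"

definition ends_with_ascent :: "nat list \<Rightarrow> bool" where
  "ends_with_ascent w \<longleftrightarrow> (2 \<le> length w \<longrightarrow> p w (length w - 1) < p w (length w))"

text \<open>\<open>andre\<close> rejects words of length at most one (there \<open>p w (length w - 1) = p w (length w)\<close>),
  but the recursive decomposition needs them as Andre words.\<close>
definition andre_word :: "nat list \<Rightarrow> bool" where
  "andre_word w \<longleftrightarrow> length w \<le> 1 \<or> andre w"

lemma andre_iff:
  "andre w \<longleftrightarrow> (\<nexists>i. double_descent w i) \<and> p w (length w - 1) < p w (length w) \<and> (\<nexists>i. bad_valley w i)"
  unfolding andre_def double_descent_def bad_valley_def Let_def by blast

lemma andre_word_iff:
  "andre_word w \<longleftrightarrow> (\<nexists>i. double_descent w i) \<and> ends_with_ascent w \<and> (\<nexists>i. bad_valley w i)"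
  unfolding andre_word_def andre_def double_descent_def bad_valley_def ends_with_ascent_def Let_def
  by auto

lemma double_descent_append_left:
  "i < length xs \<Longrightarrow> double_descent (xs @ ys) i \<longleftrightarrow> double_descent xs i"
  by (auto simp: double_descent_def p_append_left)

lemma double_descent_append_right:
  assumes "2 \<le> j"
  shows "double_descent (xs @ ys) (length xs + j) \<longleftrightarrow> double_descent ys j"
proof -
  obtain k where j: "j = Suc (Suc k)"
    using assms by (metis add_2_eq_Suc le_Suc_ex)
  show ?thesis
    using p_append_right[of "Suc k" xs ys] p_append_right[of "Suc (Suc k)" xs ys]
      p_append_right[of "Suc (Suc (Suc k))" xs ys]
    unfolding j by (auto simp: double_descent_def)
qed

lemma bad_valley_append_left:
  assumes "i < length xs" "\<forall>x\<in>set xs. a < x"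
  shows "bad_valley (xs @ a # ys) i \<longleftrightarrow> bad_valley xs i"
proof (cases "1 \<le> i")
  case True
  hence "a < p xs i"
    using assms p_in_set[of i xs] by auto
  thus ?thesis
    using assms True by (auto simp: bad_valley_def p_append_left w2_set_append_left w4_set_append_left)
qed (auto simp: bad_valley_def)

lemma bad_valley_append_right:
  assumes "2 \<le> j" "\<forall>x\<in>set ys. a < x"
  shows "bad_valley (xs @ a # ys) (Suc (length xs) + j) \<longleftrightarrow> bad_valley ys j"
proof (cases "j < length ys")
  case True
  obtain k where j: "j = Suc (Suc k)"
    using assms by (metis add_2_eq_Suc le_Suc_ex)
  have "a < p ys j"
    using assms True p_in_set[of j ys] by auto
  moreover have "w2_set (xs @ a # ys) (Suc (length xs) + j) = w2_set ys j"
    using assms True \<open>a < p ys j\<close> by (intro w2_set_append_right) auto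
  moreover have "w4_set (xs @ a # ys) (Suc (length xs) + j) = w4_set ys j"
    using assms w4_set_append_right[of j "xs @ [a]" ys] by auto
  ultimately show ?thesis
    using p_append_Cons_right[of "Suc k" xs a ys] p_append_Cons_right[of "Suc (Suc k)" xs a ys]
      p_append_Cons_right[of "Suc (Suc (Suc k))" xs a ys]
    unfolding j by (auto simp: bad_valley_def)
qed (auto simp: bad_valley_def)

context
  fixes u v :: "nat list" and m :: nat
  assumes min_letter: "\<forall>x \<in> set u \<union> set v. m < x"
begin

lemma min_letter_left: "\<forall>x\<in>set u. m < x"
  and min_letter_right: "\<forall>x\<in>set v. m < x"
  using min_letter by auto

lemma m_less_p_left: "1 \<le> i \<Longrightarrow> i \<le> length u \<Longrightarrow> m < p u i"
  and m_less_p_right: "1 \<le> i \<Longrightarrow> i \<le> length v \<Longrightarrow> m < p v i"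
  using min_letter p_in_set by auto

lemma double_descent_min_splitD:
  assumes "double_descent (u @ m # v) i"
  shows "(\<exists>i. double_descent u i) \<or> (2 \<le> length u \<and> p u (length u) < p u (length u - 1))
    \<or> (\<exists>i. double_descent v i)"
proof -
  consider "i < length u" | "i = length u" | "i = Suc (length u) \<or> i = Suc (Suc (length u))"
    | "Suc (Suc (length u)) < i"
    by linarith
  thus ?thesis
  proof cases
    case 1
    thus ?thesis
      using assms double_descent_append_left[of i u "m # v"] by auto
  next
    case 2
    thus ?thesis
      using assms by (auto simp: double_descent_def p_append_left)
  next
    case 3
    thus ?thesis
      using assms m_less_p_right[of 1] p_append_Cons_right[of 1 u m v]
      by (auto simp: double_descent_def p_at_middle)
  next
    case 4
    hence "double_descent v (i - Suc (length u))"
      using assms double_descent_append_right[of "i - Suc (length u)" "u @ [m]" v] by auto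
    thus ?thesis
      by blast
  qed
qed

lemma double_descent_min_split:
  "(\<exists>i. double_descent (u @ m # v) i)
     \<longleftrightarrow> (\<exists>i. double_descent u i) \<or> (2 \<le> length u \<and> p u (length u) < p u (length u - 1))
        \<or> (\<exists>i. double_descent v i)"
proof
  assume "(\<exists>i. double_descent u i) \<or> (2 \<le> length u \<and> p u (length u) < p u (length u - 1))
        \<or> (\<exists>i. double_descent v i)"
  thus "\<exists>i. double_descent (u @ m # v) i"
  proof (elim disjE exE)
    fix i assume "double_descent u i"
    hence "double_descent (u @ m # v) i"
      using double_descent_append_left[of i u "m # v"] by (auto simp: double_descent_def)
    thus ?thesis ..
  next
    assume "2 \<le> length u \<and> p u (length u) < p u (length u - 1)"
    hence "double_descent (u @ m # v) (length u)"
      using m_less_p_left[of "length u"] p_at_middle[of u m v]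
      by (auto simp: double_descent_def p_append_left)
    thus ?thesis ..
  next
    fix j assume "double_descent v j"
    hence "double_descent (u @ m # v) (Suc (length u) + j)"
      using double_descent_append_right[of j "u @ [m]" v] by (auto simp: double_descent_def)
    thus ?thesis ..
  qed
qed (use double_descent_min_splitD in blast)

lemma bad_valley_min_splitD:
  assumes "bad_valley (u @ m # v) i"
  shows "(\<exists>i. bad_valley u i) \<or> (u \<noteq> [] \<and> v \<noteq> [] \<and> \<not> Max (set u) < Max (set v))
    \<or> (\<exists>i. bad_valley v i)"
proof -
  consider "i < length u" | "i = length u \<or> i = Suc (Suc (length u))" | "i = Suc (length u)"
    | "Suc (Suc (length u)) < i"
    by linarith
  thus ?thesis
  proof cases
    case 1
    hence "bad_valley u i"
      using assms bad_valley_append_left[OF 1 min_letter_left] by blast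
    thus ?thesis
      by blast
  next
    case 2
    thus ?thesis
      using assms m_less_p_left[of "length u"] m_less_p_right[of 1] p_at_middle[of u m v]
        p_append_Cons_right[of 1 u m v]
      by (auto simp: bad_valley_def p_append_left)
  next
    case 3
    thus ?thesis
      using assms min_letter w2_set_at_smaller[of u m v] w4_set_at_smaller[of v m u]
      by (auto simp: bad_valley_def)
  next
    case 4
    hence "bad_valley v (i - Suc (length u))"
      using assms bad_valley_append_right[of "i - Suc (length u)" v m u] min_letter_right by auto
    thus ?thesis
      by blast
  qed
qed

lemma bad_valley_min_split:
  "(\<exists>i. bad_valley (u @ m # v) i)
     \<longleftrightarrow> (\<exists>i. bad_valley u i) \<or> (u \<noteq> [] \<and> v \<noteq> [] \<and> \<not> Max (set u) < Max (set v))
        \<or> (\<exists>i. bad_valley v i)"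
proof
  assume "(\<exists>i. bad_valley u i) \<or> (u \<noteq> [] \<and> v \<noteq> [] \<and> \<not> Max (set u) < Max (set v))
        \<or> (\<exists>i. bad_valley v i)"
  thus "\<exists>i. bad_valley (u @ m # v) i"
  proof (elim disjE exE)
    fix i assume i: "bad_valley u i"
    hence "i < length u"
      by (auto simp: bad_valley_def)
    hence "bad_valley (u @ m # v) i"
      using i bad_valley_append_left[OF _ min_letter_left] by blast
    thus ?thesis ..
  next
    assume "u \<noteq> [] \<and> v \<noteq> [] \<and> \<not> Max (set u) < Max (set v)"
    hence "bad_valley (u @ m # v) (Suc (length u))"
      using m_less_p_left[of "length u"] m_less_p_right[of 1] min_letter
        w2_set_at_smaller[of u m v] w4_set_at_smaller[of v m u] p_append_Cons_right[of 1 u m v]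
      by (auto simp: bad_valley_def p_append_left p_at_middle Suc_le_eq)
    thus ?thesis ..
  next
    fix j assume "bad_valley v j"
    hence "bad_valley (u @ m # v) (Suc (length u) + j)"
      using bad_valley_append_right[of j v m u] min_letter_right by (auto simp: bad_valley_def)
    thus ?thesis ..
  qed
qed (use bad_valley_min_splitD in blast)

lemma final_ascent_min_split:
  "p (u @ m # v) (length (u @ m # v) - 1) < p (u @ m # v) (length (u @ m # v))
     \<longleftrightarrow> v \<noteq> [] \<and> ends_with_ascent v"
proof (cases v rule: rev_cases)
  case Nil
  show ?thesis
  proof (cases "u = []")
    case False
    hence "p (u @ [m]) (length u) = p u (length u)"
      by (simp add: p_append_left Suc_le_eq)
    thus ?thesis
      using Nil False m_less_p_left[of "length u"] p_at_middle[of u m "[]"] by (simp add: Suc_le_eq)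
  qed (simp add: Nil p_def)
next
  case (snoc v' b)
  show ?thesis
  proof (cases v')
    case Nil
    thus ?thesis
      using snoc min_letter by (auto simp: p_def nth_append ends_with_ascent_def)
  next
    case (Cons c v'')
    thus ?thesis
      using snoc by (auto simp: p_def nth_append ends_with_ascent_def)
  qed
qed

lemma andre_min_split:
  assumes "distinct u"
  shows "andre (u @ m # v) \<longleftrightarrow>
    v \<noteq> [] \<and> (u \<noteq> [] \<longrightarrow> Max (set u) < Max (set v)) \<and> andre_word u \<and> andre_word v"
proof -
  have "p u (length u - 1) \<noteq> p u (length u)" if "2 \<le> length u"
    using assms that by (auto simp: p_def nth_eq_iff_index_eq)
  hence "(2 \<le> length u \<and> p u (length u) < p u (length u - 1)) \<longleftrightarrow> \<not> ends_with_ascent u"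
    by (auto simp: ends_with_ascent_def)
  thus ?thesis
    unfolding andre_iff double_descent_min_split final_ascent_min_split bad_valley_min_split andre_word_iff
    by blast
qed

end

section \<open>Descent polynomial of Andre permutations\<close>

lemma descents_Nil [simp]: "descents [] = 0"
  and descents_singleton [simp]: "descents [x] = 0"
  by (simp_all add: descents_def)

lemma descents_Cons_Cons: "descents (x # y # w) = (if y < x then 1 else 0) + descents (y # w)"
proof -
  let ?D = "\<lambda>w. {i \<in> {1..<length w}. p w (i + 1) < p w i}"
  have p_Cons: "p (x # w') (Suc i) = p w' i" if "1 \<le> i" for w' i
    using that by (simp add: p_def)
  have "?D (x # y # w) = (if y < x then {1} else {}) \<union> Suc ` ?D (y # w)"
  proof (intro set_eqI iffI)
    fix i assume i: "i \<in> ?D (x # y # w)"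
    show "i \<in> (if y < x then {1} else {}) \<union> Suc ` ?D (y # w)"
    proof (cases "i = 1")
      case False
      then obtain i' where "i = Suc i'" "1 \<le> i'"
        using i by (cases i) auto
      thus ?thesis
        using i p_Cons[of i' "y # w"] p_Cons[of "Suc i'" "y # w"] by auto
    qed (use i in \<open>simp add: p_def\<close>)
  next
    fix i assume i: "i \<in> (if y < x then {1} else {}) \<union> Suc ` ?D (y # w)"
    show "i \<in> ?D (x # y # w)"
    proof (cases "i = 1")
      case False
      then obtain i' where "i = Suc i'" "i' \<in> ?D (y # w)"
        using i by (auto split: if_splits)
      thus ?thesis
        using p_Cons[of i' "y # w"] p_Cons[of "Suc i'" "y # w"] by auto
    qed (use i in \<open>auto simp: p_def split: if_splits\<close>)
  qed
  moreover have "1 \<notin> Suc ` ?D (y # w)"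
    by auto
  ultimately show ?thesis
    by (simp add: descents_def card_insert_if card_image)
qed

lemma descents_append:
  assumes "xs \<noteq> []" "ys \<noteq> []"
  shows "descents (xs @ ys) = descents xs + descents ys + (if hd ys < last xs then 1 else 0)"
  using assms
proof (induction xs rule: induct_list012)
  case (2 x)
  then obtain y ys' where "ys = y # ys'"
    by (cases ys) auto
  thus ?case
    by (simp add: descents_Cons_Cons)
qed (simp_all add: descents_Cons_Cons)

lemma descents_min_split:
  assumes "\<forall>x \<in> set u \<union> set v. m < x"
  shows "descents (u @ m # v) = descents u + descents v + (if u = [] then 0 else 1)"
proof -
  have m_v: "descents (m # v) = descents v"
    using assms by (cases v) (auto simp: descents_Cons_Cons)
  show ?thesis
  proof (cases "u = []")
    case False
    thus ?thesis
      using descents_append[of u "m # v"] m_v assms by simp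
  qed (simp add: m_v)
qed

definition andre_words :: "nat set \<Rightarrow> nat list set" where
  "andre_words S = {w \<in> permutations_of_set S. andre_word w}"

definition andre_des_sum :: "nat set \<Rightarrow> int poly" where
  "andre_des_sum S = (\<Sum>w\<in>andre_words S. [:0, 1:] ^ descents w)"

lemma finite_andre_words: "finite (andre_words S)"
  by (cases "finite S") (simp_all add: andre_words_def permutations_of_set_infinite)

lemma andre_des_sum_empty: "andre_des_sum {} = 1"
proof -
  have "andre_words {} = {[]}"
    by (auto simp: andre_words_def andre_word_def)
  thus ?thesis
    by (simp add: andre_des_sum_def)
qed

lemma andre_des_sum_singleton: "andre_des_sum {a} = 1"
proof -
  have "andre_words {a} = {[a]}"
    by (auto simp: andre_words_def andre_word_def)
  thus ?thesis
    by (simp add: andre_des_sum_def)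
qed

lemma Max_notin_left_iff:
  assumes "set u \<inter> set v = {}" "set u \<union> set v \<noteq> {}"
  shows "v \<noteq> [] \<and> (u \<noteq> [] \<longrightarrow> Max (set u) < Max (set v)) \<longleftrightarrow> Max (set u \<union> set v) \<notin> set u"
proof (cases "u = [] \<or> v = []")
  case False
  hence "Max (set u) \<in> set u" "Max (set v) \<in> set v"
    by auto
  hence "Max (set u) \<noteq> Max (set v)"
    using assms(1) by auto
  moreover have "Max (set u \<union> set v) = max (Max (set u)) (Max (set v))"
    using False by (simp add: Max_Un)
  ultimately show ?thesis
    using False \<open>Max (set u) \<in> set u\<close> \<open>Max (set v) \<in> set v\<close> assms(1)
    by (cases "Max (set u) < Max (set v)") (auto simp: max_def)
qed (use assms in auto)

lemma append_Min_in_andre_words_iff: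
  assumes S: "finite S" "2 \<le> card S" and m: "Min S \<notin> set u" "Min S \<notin> set v"
  shows "u @ Min S # v \<in> andre_words S \<longleftrightarrow>
    set u \<subseteq> S - {Min S} - {Max S} \<and> u \<in> andre_words (set u) \<and> v \<in> andre_words (S - {Min S} - set u)"
proof
  assume w: "u @ Min S # v \<in> andre_words S"
  hence perm: "set u \<union> set v = S - {Min S}" "set u \<inter> set v = {}" "distinct u" "distinct v"
    using m by (auto simp: andre_words_def permutations_of_set_def)
  have "set (u @ Min S # v) = S" "distinct (u @ Min S # v)"
    using w by (auto simp: andre_words_def permutations_of_set_def)
  hence "2 \<le> length (u @ Min S # v)"
    using S(2) distinct_card by metis
  hence "andre (u @ Min S # v)"
    using w by (auto simp: andre_words_def andre_word_def)
  hence "v \<noteq> [] \<and> (u \<noteq> [] \<longrightarrow> Max (set u) < Max (set v)) \<and> andre_word u \<and> andre_word v"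
    using andre_min_split[of u v "Min S"] perm Min_less_Diff_Min[OF S(1)] by auto
  moreover have "Max (set u \<union> set v) = Max S"
    using perm Max_Diff_Min[OF S] by simp
  ultimately show "set u \<subseteq> S - {Min S} - {Max S} \<and> u \<in> andre_words (set u)
      \<and> v \<in> andre_words (S - {Min S} - set u)"
    using Max_notin_left_iff[of u v] perm Min_less_Max[OF S]
    by (auto simp: andre_words_def permutations_of_set_def)
next
  assume uv: "set u \<subseteq> S - {Min S} - {Max S} \<and> u \<in> andre_words (set u) \<and> v \<in> andre_words (S - {Min S} - set u)"
  hence perm: "set u \<union> set v = S - {Min S}" "set u \<inter> set v = {}" "distinct u" "distinct v"
    and words: "andre_word u" "andre_word v"
    by (auto simp: andre_words_def permutations_of_set_def)
  have "set u \<union> set v \<noteq> {}" "Max (set u \<union> set v) \<notin> set u"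
    using perm uv Min_Max_mem[OF S] Max_Diff_Min[OF S] by auto
  hence "andre (u @ Min S # v)"
    using andre_min_split[of u v "Min S"] Max_notin_left_iff[of u v] perm words Min_less_Diff_Min[OF S(1)]
    by auto
  thus "u @ Min S # v \<in> andre_words S"
    using perm m Min_Max_mem[OF S] by (auto simp: andre_words_def permutations_of_set_def andre_word_def)
qed

lemma andre_words_min_split:
  assumes S: "finite S" "2 \<le> card S"
  shows "bij_betw (\<lambda>(U, u, v). u @ Min S # v)
    (SIGMA U:{U. U \<subseteq> S - {Min S} - {Max S}}. andre_words U \<times> andre_words (S - {Min S} - U))
    (andre_words S)" (is "bij_betw ?f ?Q _")
proof (rule bij_betwI')
  have Q: "U = set u \<and> Min S \<notin> set u \<and> Min S \<notin> set v" if "(U, u, v) \<in> ?Q" for U u v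
    using that by (auto simp: andre_words_def permutations_of_set_def)
  {
    fix x y assume "x \<in> ?Q" "y \<in> ?Q"
    moreover obtain U u v U' u' v' where "x = (U, u, v)" "y = (U', u', v')"
      by (cases x, cases y)
    ultimately show "(?f x = ?f y) = (x = y)"
      using Q[of U u v] Q[of U' u' v'] by (auto simp: append_Cons_eq_iff)
  next
    fix x assume "x \<in> ?Q"
    moreover obtain U u v where "x = (U, u, v)"
      by (cases x)
    ultimately show "?f x \<in> andre_words S"
      using append_Min_in_andre_words_iff[OF S, of u v] Q[of U u v] by auto
  }
next
  fix w assume w: "w \<in> andre_words S"
  hence "Min S \<in> set w" "distinct w"
    using Min_Max_mem[OF S] by (auto simp: andre_words_def permutations_of_set_def)
  moreover from this obtain u v where "w = u @ Min S # v"
    by (meson split_list)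
  ultimately have "w = u @ Min S # v" "Min S \<notin> set u" "Min S \<notin> set v"
    by auto
  thus "\<exists>x\<in>?Q. w = ?f x"
    using w append_Min_in_andre_words_iff[OF S] by (intro bexI[of _ "(set u, u, v)"]) auto
qed

lemma sum_descents_append_Min:
  assumes "finite S" "U \<subseteq> S - {Min S}"
  shows "(\<Sum>(u, v) \<in> andre_words U \<times> andre_words (S - {Min S} - U). [:0, 1:] ^ descents (u @ Min S # v))
    = (if U = {} then 1 else [:0, 1:]) * (andre_des_sum U * andre_des_sum (S - {Min S} - U))"
proof -
  let ?X = "[:0, 1:] :: int poly"
  define c where "c = (if U = {} then 1 else ?X)"
  have "?X ^ descents (u @ Min S # v) = c * (?X ^ descents u * ?X ^ descents v)"
    if "u \<in> andre_words U" "v \<in> andre_words (S - {Min S} - U)" for u v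
  proof -
    have "set u = U" "set v = S - {Min S} - U"
      using that by (auto simp: andre_words_def permutations_of_set_def)
    moreover from this have "\<forall>x \<in> set u \<union> set v. Min S < x"
      using Min_less_Diff_Min[OF assms(1)] assms(2) by auto
    ultimately have "descents (u @ Min S # v) = descents u + descents v + (if U = {} then 0 else 1)"
      using descents_min_split[of u v "Min S"] by auto
    thus ?thesis
      by (simp add: c_def power_add)
  qed
  hence "(\<Sum>(u, v) \<in> andre_words U \<times> andre_words (S - {Min S} - U). ?X ^ descents (u @ Min S # v))
      = (\<Sum>(u, v) \<in> andre_words U \<times> andre_words (S - {Min S} - U). c * (?X ^ descents u * ?X ^ descents v))"
    by (intro sum.cong) auto
  also have "\<dots> = c * (\<Sum>(u, v) \<in> andre_words U \<times> andre_words (S - {Min S} - U). ?X ^ descents u * ?X ^ descents v)"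
    by (simp add: sum_distrib_left case_prod_unfold)
  also have "\<dots> = c * (andre_des_sum U * andre_des_sum (S - {Min S} - U))"
    unfolding andre_des_sum_def by (simp only: sum_product sum.cartesian_product)
  finally show ?thesis
    by (simp only: c_def)
qed

lemma andre_des_sum_rec:
  assumes "finite S" "2 \<le> card S"
  shows "andre_des_sum S = andre_des_sum (S - {Min S})
    + [:0, 1:] * (\<Sum>U | U \<subseteq> S - {Min S} - {Max S} \<and> U \<noteq> {}.
                    andre_des_sum U * andre_des_sum (S - {Min S} - U))"
proof -
  define A where "A = S - {Min S} - {Max S}"
  let ?g = "\<lambda>U. (if U = {} then 1 else [:0, 1:]) * (andre_des_sum U * andre_des_sum (S - {Min S} - U))"
  have "andre_des_sum S = (\<Sum>(U, u, v) \<in> (SIGMA U:{U. U \<subseteq> A}. andre_words U \<times> andre_words (S - {Min S} - U)).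
      [:0, 1:] ^ descents (u @ Min S # v))"
    unfolding andre_des_sum_def A_def
    using sum.reindex_bij_betw[OF andre_words_min_split[OF assms], of "\<lambda>w. [:0, 1:] ^ descents w :: int poly"]
    by (simp add: case_prod_unfold)
  also have "\<dots> = (\<Sum>U | U \<subseteq> A. \<Sum>(u, v) \<in> andre_words U \<times> andre_words (S - {Min S} - U).
      [:0, 1:] ^ descents (u @ Min S # v))"
    using assms(1) by (subst sum.Sigma) (auto simp: A_def finite_andre_words)
  also have "\<dots> = (\<Sum>U | U \<subseteq> A. ?g U)"
    by (intro sum.cong refl sum_descents_append_Min[OF assms(1)]) (auto simp: A_def)
  also have "{U. U \<subseteq> A} = insert {} {U. U \<subseteq> A \<and> U \<noteq> {}}"
    by auto
  also have "sum ?g (insert {} {U. U \<subseteq> A \<and> U \<noteq> {}})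
      = andre_des_sum (S - {Min S}) + [:0, 1:] * (\<Sum>U | U \<subseteq> A \<and> U \<noteq> {}. andre_des_sum U * andre_des_sum (S - {Min S} - U))"
    using assms(1) by (simp add: A_def andre_des_sum_empty sum_distrib_left)
  finally show ?thesis
    by (simp add: A_def)
qed

lemma andre_des_sum_eq_andre_poly: "finite S \<Longrightarrow> andre_des_sum S = andre_poly (card S)"
proof (induction S rule: card_ge_2_induct)
  case (card_ge_2 S)
  define T where "T = S - {Min S}"
  obtain n where n: "card S = Suc (Suc n)"
    using card_ge_2.hyps(2) by (metis add_2_eq_Suc le_Suc_ex)
  have T: "Max S \<in> T" "card T = Suc n" "T \<subset> S"
    using Min_Max_mem[OF card_ge_2.hyps(1,2)] card_ge_2.hyps(1) n by (auto simp: T_def)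
  have IH: "andre_des_sum U = andre_poly (card U)" if "U \<subseteq> T" for U
    using card_ge_2.IH that T(3) by blast
  have "andre_des_sum S = andre_poly (Suc n)
      + [:0, 1:] * (\<Sum>U | U \<subseteq> T - {Max S} \<and> U \<noteq> {}. andre_des_sum U * andre_des_sum (T - U))"
    using andre_des_sum_rec[OF card_ge_2.hyps(1,2)] IH[of T] T(2) by (simp add: T_def)
  also have "(\<Sum>U | U \<subseteq> T - {Max S} \<and> U \<noteq> {}. andre_des_sum U * andre_des_sum (T - U))
      = (\<Sum>j=1..n. of_nat (n choose j) * (andre_poly j * andre_poly (Suc n - j)))"
  proof (subst sum_nonempty_subsets_by_card)
    fix U assume "U \<subseteq> T - {Max S}"
    moreover have "finite T"
      using card_ge_2.hyps(1) by (simp add: T_def)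
    ultimately have "U \<subseteq> T" "finite U"
      by (auto intro: finite_subset)
    thus "andre_des_sum U * andre_des_sum (T - U) = andre_poly (card U) * andre_poly (Suc n - card U)"
      using IH[of U] IH[of "T - U"] T(2) by (simp add: card_Diff_subset)
  qed (use card_ge_2.hyps(1) T(1,2) in \<open>auto simp: T_def\<close>)
  finally show ?case
    using n by (simp add: mult.assoc)
qed (simp_all add: andre_des_sum_empty andre_des_sum_singleton)

lemma d_eq_coeff_andre_poly:
  assumes "2 \<le> n"
  shows "int (d n k) = coeff (andre_poly n) k"
proof -
  have "andre_words {1..n} = {w \<in> permutations_of_set {1..n}. andre w}"
    using assms by (auto simp: andre_words_def andre_word_def permutations_of_set_def
        simp flip: distinct_card)
  hence "{w \<in> andre_words {1..n}. descents w = k} = {w \<in> permutations_of_set {1..n}. andre w \<and> descents w = k}"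
    by auto
  moreover have "coeff (andre_des_sum {1..n}) k = int (card {w \<in> andre_words {1..n}. descents w = k})"
    using finite_andre_words[of "{1..n}"]
    by (simp add: andre_des_sum_def coeff_sum monom_altdef[of 1, simplified, symmetric] coeff_monom
        sum.If_cases Int_def)
  ultimately show ?thesis
    using andre_des_sum_eq_andre_poly[of "{1..n}"] by (simp add: d_def)
qed

section \<open>HR-trees\<close>

lemma nodes_Leaf [simp]: "nodes Leaf = {}"
  by (simp add: nodes_def)

lemma nodes_Node: "nodes (Node l a r) = insert (Node l a r) (nodes l \<union> nodes r)"
  by (auto simp: nodes_def)

lemma finite_nodes: "finite (nodes t)"
  by (induction t) (auto simp: nodes_Node)

lemma value_in_set_tree: "s \<in> nodes t \<Longrightarrow> value s \<in> set_tree t"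
  by (induction t) (auto simp: nodes_Node)

lemma Node_notin_nodes: "Node l a r \<notin> nodes l" "Node l a r \<notin> nodes r"
  using size_subtrees[of "Node l a r" l] size_subtrees[of "Node l a r" r] by (auto simp: nodes_def)

lemma finite_trees_height: "finite S \<Longrightarrow> finite {t. set_tree t \<subseteq> S \<and> height t \<le> n}"
proof (induction n)
  case 0
  have "{t. set_tree t \<subseteq> S \<and> height t \<le> 0} = {Leaf}"
    by auto
  thus ?case
    by simp
next
  case (Suc n)
  let ?T = "{t. set_tree t \<subseteq> S \<and> height t \<le> n}"
  have "{t. set_tree t \<subseteq> S \<and> height t \<le> Suc n} \<subseteq> insert Leaf ((\<lambda>(l, a, r). Node l a r) ` (?T \<times> S \<times> ?T))"
  proof
    fix t assume "t \<in> {t. set_tree t \<subseteq> S \<and> height t \<le> Suc n}"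
    thus "t \<in> insert Leaf ((\<lambda>(l, a, r). Node l a r) ` (?T \<times> S \<times> ?T))"
      by (cases t) force+
  qed
  thus ?case
    using Suc by (auto intro: finite_subset)
qed

lemma min_count_Leaf [simp]: "min_count Leaf = 0"
  by (simp add: min_count_def)

lemma min_count_Node:
  assumes "distinct (inorder (Node l a r))"
  shows "min_count (Node l a r) = min_count l + min_count r
    + (if is_inner (Node l a r) \<and> is_min_node (Node l a r) then 1 else 0)"
proof -
  let ?t = "Node l a r"
  let ?N = "\<lambda>t. {s \<in> nodes t. is_inner s \<and> is_min_node s}"
  have "?N l \<inter> ?N r = {}"
    using assms value_in_set_tree[of _ l] value_in_set_tree[of _ r] by fastforce
  moreover have "?N ?t = (if is_inner ?t \<and> is_min_node ?t then insert ?t else id) (?N l \<union> ?N r)"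
    by (auto simp: nodes_Node)
  ultimately show ?thesis
    using Node_notin_nodes[of l a r] finite_nodes[of l] finite_nodes[of r]
    by (simp add: min_count_def card_Un_disjoint)
qed

lemma min_count_Node_right_child:
  assumes "distinct (inorder (Node l a r))" "r \<noteq> Leaf"
  shows "min_count (Node l a r) = min_count l + min_count r
    + (if a = Min (set_tree (Node l a r)) then 1 else 0)"
  using assms by (simp add: min_count_Node is_inner_def is_min_node_def)

definition hr_node :: "nat tree \<Rightarrow> bool" where
  "hr_node s \<longleftrightarrow> (is_min_node s \<or> is_max_node s) \<and> (is_inner s \<longrightarrow>
     right s \<noteq> Leaf \<and>
     (is_min_node s \<longrightarrow> Max (set_tree s) \<in> set_tree (right s)) \<and>
     (is_max_node s \<longrightarrow> Min (set_tree s) \<in> set_tree (right s)))"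

lemma HR_tree_iff: "HR_tree t \<longleftrightarrow> (\<forall>s\<in>nodes t. hr_node s)"
  unfolding HR_tree_def min_max_tree_def hr_node_def by blast

definition min_if_binary :: "nat tree \<Rightarrow> bool" where
  "min_if_binary s \<longleftrightarrow> (left s \<noteq> Leaf \<and> right s \<noteq> Leaf \<longrightarrow> is_min_node s)"

definition min_one_child :: "nat tree \<Rightarrow> bool" where
  "min_one_child s \<longleftrightarrow> is_min_node s \<and> one_child s"

fun one_child_labels :: "nat tree \<Rightarrow> nat list" where
  "one_child_labels Leaf = []"
| "one_child_labels (Node l a r) =
     one_child_labels l @ (if one_child (Node l a r) then [a] else []) @ one_child_labels r"

lemma one_child_list_eq:
  "distinct (inorder t) \<Longrightarrow> one_child_list t = one_child_labels t"
proof (induction t)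
  case (Node l a r)
  let ?P = "\<lambda>t x. \<exists>s\<in>nodes t. one_child s \<and> value s = x"
  have "?P (Node l a r) x \<longleftrightarrow> ?P l x" if "x \<in> set_tree l" for x
    using that Node.prems value_in_set_tree[of _ r] by (fastforce simp: nodes_Node)
  hence "filter (?P (Node l a r)) (inorder l) = filter (?P l) (inorder l)"
    by (intro filter_cong) auto
  moreover have "?P (Node l a r) x \<longleftrightarrow> ?P r x" if "x \<in> set_tree r" for x
    using that Node.prems value_in_set_tree[of _ l] by (fastforce simp: nodes_Node)
  hence "filter (?P (Node l a r)) (inorder r) = filter (?P r) (inorder r)"
    by (intro filter_cong) auto
  moreover have "?P (Node l a r) a \<longleftrightarrow> one_child (Node l a r)"
    using Node.prems value_in_set_tree[of _ l] value_in_set_tree[of _ r] by (fastforce simp: nodes_Node)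
  ultimately show ?case
    using Node by (simp add: one_child_list_def)
qed (simp add: one_child_list_def)

lemma distinct_one_child_labels: "distinct (inorder t) \<Longrightarrow> distinct (one_child_labels t)"
  by (metis distinct_filter one_child_list_def one_child_list_eq)

text \<open>A nonempty binary tree has one more childless node than two-child nodes.\<close>
lemma odd_one_child_labels_size: "t \<noteq> Leaf \<Longrightarrow> odd (length (one_child_labels t) + size t)"
proof (induction t)
  case (Node l a r)
  thus ?case
    by (cases "l = Leaf"; cases "r = Leaf") (auto simp: one_child_def)
qed simp

lemma odd_one_child_labels_iff:
  assumes "l \<noteq> Leaf" "distinct (inorder l)"
  shows "odd (length (one_child_labels l)) \<longleftrightarrow> even (card (set_tree l))"
  using odd_one_child_labels_size[OF assms(1)] assms(2)
  by (simp flip: length_inorder distinct_card)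

definition at_even_position :: "nat list \<Rightarrow> nat \<Rightarrow> bool" where
  "at_even_position L a \<longleftrightarrow> (\<exists>k. 1 \<le> k \<and> k \<le> length L \<and> even k \<and> L ! (k - 1) = a)"

lemma at_even_position_nth:
  assumes "distinct L" "j < length L"
  shows "at_even_position L (L ! j) \<longleftrightarrow> odd j"
proof
  assume "at_even_position L (L ! j)"
  then obtain k where "1 \<le> k" "k \<le> length L" "even k" "L ! (k - 1) = L ! j"
    by (auto simp: at_even_position_def)
  moreover from this have "k - 1 = j"
    using assms nth_eq_iff_index_eq by fastforce
  ultimately show "odd j"
    by (cases k) auto
qed (use assms in \<open>auto simp: at_even_position_def intro!: exI[of _ "Suc j"]\<close>)

text \<open>The flag \<open>b\<close> is the parity of the number of one-child nodes read before the subtree.\<close>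
fun even_min_one_child :: "bool \<Rightarrow> nat tree \<Rightarrow> bool" where
  "even_min_one_child b Leaf = True"
| "even_min_one_child b (Node l a r) \<longleftrightarrow>
     even_min_one_child b l \<and>
     (min_one_child (Node l a r) \<longrightarrow> b \<noteq> odd (length (one_child_labels l))) \<and>
     even_min_one_child ((b \<noteq> odd (length (one_child_labels l))) \<noteq> one_child (Node l a r)) r"

lemma even_min_one_child_iff:
  assumes "distinct (pre @ one_child_labels t @ suf)"
  shows "(\<forall>s\<in>nodes t. min_one_child s \<longrightarrow> at_even_position (pre @ one_child_labels t @ suf) (value s))
    \<longleftrightarrow> even_min_one_child (odd (length pre)) t"
  using assms
proof (induction t arbitrary: pre suf)
  case (Node l a r)
  let ?t = "Node l a r"
  let ?a = "if one_child ?t then [a] else []"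
  let ?L = "pre @ one_child_labels ?t @ suf"
  have IH_l: "(\<forall>s\<in>nodes l. min_one_child s \<longrightarrow> at_even_position ?L (value s))
      \<longleftrightarrow> even_min_one_child (odd (length pre)) l"
    using Node.IH(1)[of pre "?a @ one_child_labels r @ suf"] Node.prems by simp
  have IH_r: "(\<forall>s\<in>nodes r. min_one_child s \<longrightarrow> at_even_position ?L (value s))
      \<longleftrightarrow> even_min_one_child ((odd (length pre) \<noteq> odd (length (one_child_labels l))) \<noteq> one_child ?t) r"
    using Node.IH(2)[of "pre @ one_child_labels l @ ?a" suf] Node.prems by simp
  have root: "at_even_position ?L a \<longleftrightarrow> odd (length pre) \<noteq> odd (length (one_child_labels l))"
    if "min_one_child ?t"
  proof -
    have "?L ! (length pre + length (one_child_labels l)) = a"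
      "length pre + length (one_child_labels l) < length ?L"
      using that by (simp_all add: min_one_child_def nth_append)
    thus ?thesis
      using at_even_position_nth[OF Node.prems, of "length pre + length (one_child_labels l)"] by simp
  qed
  show ?case
    unfolding nodes_Node using IH_l IH_r root by auto
qed simp

definition HR_tilde_on :: "nat set \<Rightarrow> bool \<Rightarrow> nat tree set" where
  "HR_tilde_on S b = {t. distinct (inorder t) \<and> set_tree t = S
     \<and> (\<forall>s\<in>nodes t. hr_node s \<and> min_if_binary s) \<and> even_min_one_child b t}"

lemma HR_tilde_eq_HR_tilde_on: "HR_tilde n = HR_tilde_on {1..n} False"
proof -
  have "(\<forall>s\<in>nodes t. min_one_child s \<longrightarrow> even_one_child t (value s)) \<longleftrightarrow> even_min_one_child False t"
    if "distinct (inorder t)" for t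
    using that even_min_one_child_iff[of "[]" t "[]"] distinct_one_child_labels[of t]
    by (simp add: even_one_child_def at_even_position_def one_child_list_eq)
  thus ?thesis
    by (auto simp: HR_tilde_def HR_def HR_tilde_on_def HR_tree_iff min_if_binary_def min_one_child_def)
qed

lemma Node_in_HR_tilde_on_iff:
  "Node l a r \<in> HR_tilde_on S b \<longleftrightarrow>
     distinct (inorder (Node l a r)) \<and> set_tree (Node l a r) = S
     \<and> hr_node (Node l a r) \<and> min_if_binary (Node l a r)
     \<and> (min_one_child (Node l a r) \<longrightarrow> b \<noteq> odd (length (one_child_labels l)))
     \<and> l \<in> HR_tilde_on (set_tree l) b
     \<and> r \<in> HR_tilde_on (set_tree r) ((b \<noteq> odd (length (one_child_labels l))) \<noteq> one_child (Node l a r))"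
  by (auto simp: HR_tilde_on_def nodes_Node)

lemma HR_tilde_on_empty: "HR_tilde_on {} b = {Leaf}"
  by (auto simp: HR_tilde_on_def)

lemma HR_tilde_on_singleton: "HR_tilde_on {a} b = {Node Leaf a Leaf}"
proof -
  have "t = Node Leaf a Leaf" if "set_tree t = {a}" "distinct (inorder t)" for t
    using that by (cases t) (auto simp: Un_singleton_iff simp flip: eq_set_tree_empty)
  moreover have "Node Leaf a Leaf \<in> HR_tilde_on {a} b"
    by (simp add: HR_tilde_on_def nodes_Node hr_node_def is_min_node_def is_inner_def
        min_if_binary_def min_one_child_def one_child_def)
  ultimately show ?thesis
    by (auto simp: HR_tilde_on_def)
qed

lemma finite_HR_tilde_on:
  assumes "finite S"
  shows "finite (HR_tilde_on S b)"
proof (rule finite_subset)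
  show "HR_tilde_on S b \<subseteq> {t. set_tree t \<subseteq> S \<and> height t \<le> card S}"
  proof
    fix t assume "t \<in> HR_tilde_on S b"
    hence "set_tree t = S" "card S = size t"
      by (auto simp: HR_tilde_on_def simp flip: length_inorder distinct_card)
    thus "t \<in> {t. set_tree t \<subseteq> S \<and> height t \<le> card S}"
      using height_le_size_tree[of t] by simp
  qed
qed (rule finite_trees_height[OF assms])

section \<open>Min-node polynomial of HR-trees\<close>

definition min_count_sum :: "nat set \<Rightarrow> bool \<Rightarrow> int poly" where
  "min_count_sum S b = (\<Sum>t\<in>HR_tilde_on S b. [:0, 1:] ^ min_count t)"

context
  fixes S :: "nat set"
  assumes finite_S: "finite S" and card_S: "2 \<le> card S"
begin

lemma Min_in_S: "Min S \<in> S"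
  and Max_in_S: "Max S \<in> S"
  using Min_Max_mem[OF finite_S card_S] by auto

lemma Min_less_Max_S: "Min S < Max S"
  using Min_less_Max[OF finite_S card_S] .

lemma HR_tilde_on_root:
  assumes "Node l a r \<in> HR_tilde_on S b"
  shows "r \<noteq> Leaf" and "a = Max S \<and> l = Leaf \<or> a = Min S \<and> Max S \<in> set_tree r"
proof -
  let ?t = "Node l a r"
  have t: "set_tree ?t = S" "hr_node ?t" "min_if_binary ?t"
    using assms by (simp_all add: Node_in_HR_tilde_on_iff)
  hence "is_inner ?t"
    using card_S by (auto simp: is_inner_def)
  thus "r \<noteq> Leaf"
    using t(2) by (simp add: hr_node_def)
  show "a = Max S \<and> l = Leaf \<or> a = Min S \<and> Max S \<in> set_tree r"
  proof (cases "is_min_node ?t")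
    case True
    hence "a = Min S"
      using t(1) by (simp add: is_min_node_def del: tree.set)
    moreover have "Max S \<in> set_tree r"
      using True t(1,2) \<open>is_inner ?t\<close> by (simp add: hr_node_def del: tree.set)
    ultimately show ?thesis
      by simp
  next
    case False
    hence "a = Max S"
      using t(1,2) by (simp add: hr_node_def is_max_node_def del: tree.set)
    moreover have "l = Leaf"
      using False t(3) \<open>r \<noteq> Leaf\<close> by (simp add: min_if_binary_def)
    ultimately show ?thesis
      by simp
  qed
qed

lemma HR_tilde_on_root_cases:
  assumes "t \<in> HR_tilde_on S b"
  obtains (max_root) r where "t = Node Leaf (Max S) r" "r \<in> HR_tilde_on (S - {Max S}) (\<not> b)"
  | (min_root_one_child) r where "b" "t = Node Leaf (Min S) r" "r \<in> HR_tilde_on (S - {Min S}) False"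
  | (min_root_binary) l r where "t = Node l (Min S) r" "set_tree l \<subseteq> S - {Min S} - {Max S}"
      "set_tree l \<noteq> {}" "l \<in> HR_tilde_on (set_tree l) b"
      "r \<in> HR_tilde_on (S - {Min S} - set_tree l) (b \<noteq> even (card (set_tree l)))"
proof -
  obtain l a r where t: "t = Node l a r"
    using assms card_S by (cases t) (auto simp: HR_tilde_on_def)
  let ?flag = "(b \<noteq> odd (length (one_child_labels l))) \<noteq> one_child t"
  have T: "distinct (inorder t)" "set_tree t = S"
    "min_one_child t \<longrightarrow> b \<noteq> odd (length (one_child_labels l))"
    "l \<in> HR_tilde_on (set_tree l) b" "r \<in> HR_tilde_on (set_tree r) ?flag"
    using assms unfolding t Node_in_HR_tilde_on_iff by auto
  have "r \<noteq> Leaf"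
    using HR_tilde_on_root(1) assms by (simp add: t)
  consider "a = Max S" "l = Leaf" | "a = Min S" "Max S \<in> set_tree r"
    using HR_tilde_on_root(2) assms by (auto simp: t)
  thus thesis
  proof cases
    case 1
    moreover from this have "set_tree r = S - {Max S}"
      using T(1,2) by (auto simp: t)
    ultimately show thesis
      using max_root[of r] T(5) \<open>r \<noteq> Leaf\<close> by (simp add: t one_child_def)
  next
    case 2
    show thesis
    proof (cases "l = Leaf")
      case True
      hence "b" "set_tree r = S - {Min S}"
        using T 2 \<open>r \<noteq> Leaf\<close> by (auto simp: t min_one_child_def one_child_def is_min_node_def)
      thus thesis
        using min_root_one_child[of r] True 2 T(5) \<open>r \<noteq> Leaf\<close> by (simp add: t one_child_def)
    next
      case False
      hence "?flag \<longleftrightarrow> b \<noteq> even (card (set_tree l))"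
        using odd_one_child_labels_iff[of l] T(1) \<open>r \<noteq> Leaf\<close> by (simp add: t one_child_def)
      moreover have "set_tree l \<subseteq> S - {Min S} - {Max S}" "set_tree r = S - {Min S} - set_tree l"
        using T(1,2) 2 by (auto simp: t)
      ultimately show thesis
        using min_root_binary 2 T(4,5) False by (auto simp: t)
    qed
  qed
qed

lemma Node_Max_in_HR_tilde_on:
  assumes "r \<in> HR_tilde_on (S - {Max S}) (\<not> b)"
  shows "Node Leaf (Max S) r \<in> HR_tilde_on S b"
proof -
  let ?t = "Node Leaf (Max S) r"
  have r: "distinct (inorder r)" "set_tree r = S - {Max S}"
    using assms by (auto simp: HR_tilde_on_def)
  hence "set_tree ?t = S" "Min S \<in> set_tree r"
    using Max_in_S Min_in_S Min_less_Max_S by auto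
  moreover from this have "r \<noteq> Leaf" "\<not> is_min_node ?t"
    using Min_less_Max_S by (auto simp: is_min_node_def)
  ultimately have "hr_node ?t" "\<not> min_one_child ?t" "one_child ?t"
    by (auto simp: hr_node_def is_max_node_def is_inner_def min_one_child_def one_child_def)
  thus ?thesis
    using assms r \<open>set_tree ?t = S\<close>
    by (simp add: Node_in_HR_tilde_on_iff HR_tilde_on_empty min_if_binary_def)
qed

lemma Node_Min_in_HR_tilde_on:
  assumes "r \<in> HR_tilde_on (S - {Min S}) False"
  shows "Node Leaf (Min S) r \<in> HR_tilde_on S True"
proof -
  let ?t = "Node Leaf (Min S) r"
  have r: "distinct (inorder r)" "set_tree r = S - {Min S}"
    using assms by (auto simp: HR_tilde_on_def)
  hence "set_tree ?t = S" "Max S \<in> set_tree r"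
    using Max_in_S Min_in_S Min_less_Max_S by auto
  moreover from this have "r \<noteq> Leaf" "\<not> is_max_node ?t"
    using Min_less_Max_S by (auto simp: is_max_node_def)
  ultimately have "hr_node ?t" "one_child ?t"
    by (auto simp: hr_node_def is_min_node_def is_inner_def one_child_def)
  thus ?thesis
    using assms r \<open>set_tree ?t = S\<close>
    by (simp add: Node_in_HR_tilde_on_iff HR_tilde_on_empty min_if_binary_def)
qed

lemma Node_Min_binary_in_HR_tilde_on:
  assumes U: "U \<subseteq> S - {Min S} - {Max S}" "U \<noteq> {}"
    and l: "l \<in> HR_tilde_on U b" and r: "r \<in> HR_tilde_on (S - {Min S} - U) (b \<noteq> even (card U))"
  shows "Node l (Min S) r \<in> HR_tilde_on S b"
proof -
  let ?t = "Node l (Min S) r"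
  have L: "distinct (inorder l)" "set_tree l = U" and R: "distinct (inorder r)" "set_tree r = S - {Min S} - U"
    using l r by (auto simp: HR_tilde_on_def)
  hence "set_tree ?t = S" "Max S \<in> set_tree r" "l \<noteq> Leaf"
    using U Max_in_S Min_in_S Min_less_Max_S by auto
  moreover from this have "r \<noteq> Leaf" "\<not> is_max_node ?t"
    using Min_less_Max_S by (auto simp: is_max_node_def)
  ultimately have "hr_node ?t" "is_min_node ?t" "\<not> one_child ?t"
    by (auto simp: hr_node_def is_min_node_def is_inner_def one_child_def)
  moreover have "odd (length (one_child_labels l)) \<longleftrightarrow> even (card U)"
    using odd_one_child_labels_iff[OF \<open>l \<noteq> Leaf\<close> L(1)] L(2) by simp
  moreover have "distinct (inorder ?t)"
    using L R U by auto
  ultimately show ?thesis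
    using l r L R \<open>set_tree ?t = S\<close>
    by (simp add: Node_in_HR_tilde_on_iff min_if_binary_def min_one_child_def)
qed

abbreviation binary_min_root_parts :: "bool \<Rightarrow> (nat set \<times> nat tree \<times> nat tree) set" where
  "binary_min_root_parts b \<equiv> SIGMA U:{U. U \<subseteq> S - {Min S} - {Max S} \<and> U \<noteq> {}}.
     HR_tilde_on U b \<times> HR_tilde_on (S - {Min S} - U) (b \<noteq> even (card U))"

lemma HR_tilde_on_decomp:
  "HR_tilde_on S b = Node Leaf (Max S) ` HR_tilde_on (S - {Max S}) (\<not> b)
     \<union> (if b then Node Leaf (Min S) ` HR_tilde_on (S - {Min S}) False else {})
     \<union> (\<lambda>(U, l, r). Node l (Min S) r) ` binary_min_root_parts b"
  (is "_ = ?A1 \<union> ?A2 \<union> ?A3")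
proof
  show "HR_tilde_on S b \<subseteq> ?A1 \<union> ?A2 \<union> ?A3"
  proof
    fix t assume "t \<in> HR_tilde_on S b"
    thus "t \<in> ?A1 \<union> ?A2 \<union> ?A3"
    proof (cases rule: HR_tilde_on_root_cases)
      case (max_root r)
      hence "t \<in> ?A1"
        by simp
      thus ?thesis
        by blast
    next
      case (min_root_one_child r)
      hence "t \<in> ?A2"
        by simp
      thus ?thesis
        by blast
    next
      case (min_root_binary l r)
      hence "(set_tree l, l, r) \<in> binary_min_root_parts b"
        by simp
      hence "t \<in> ?A3"
        by (rule rev_image_eqI) (simp add: min_root_binary(1))
      thus ?thesis
        by blast
    qed
  qed
  have "?A3 \<subseteq> HR_tilde_on S b"
    using Node_Min_binary_in_HR_tilde_on by auto
  thus "?A1 \<union> ?A2 \<union> ?A3 \<subseteq> HR_tilde_on S b"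
    using Node_Max_in_HR_tilde_on Node_Min_in_HR_tilde_on by auto
qed

lemma sum_Node_Leaf_root:
  assumes "a \<in> S"
  shows "(\<Sum>t \<in> Node Leaf a ` HR_tilde_on (S - {a}) c. [:0, 1:] ^ min_count t)
    = (if a = Min S then [:0, 1:] else 1) * min_count_sum (S - {a}) c"
proof -
  have "min_count (Node Leaf a r) = min_count r + (if a = Min S then 1 else 0)"
    if "r \<in> HR_tilde_on (S - {a}) c" for r
  proof -
    have "distinct (inorder (Node Leaf a r))" "set_tree (Node Leaf a r) = S"
      using that assms by (auto simp: HR_tilde_on_def)
    moreover have "S - {a} \<noteq> {}"
      using card_S card_mono[OF _ Diff_eq_empty_iff[THEN iffD1], of "{a}" S] by auto
    hence "r \<noteq> Leaf"
      using that by (auto simp: HR_tilde_on_def)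
    ultimately show ?thesis
      by (simp add: min_count_Node_right_child)
  qed
  hence "(\<Sum>t \<in> Node Leaf a ` HR_tilde_on (S - {a}) c. [:0, 1:] ^ min_count t)
      = (\<Sum>r \<in> HR_tilde_on (S - {a}) c. [:0, 1:] ^ (if a = Min S then 1 else 0) * [:0, 1:] ^ min_count r)"
    by (simp add: sum.reindex inj_on_def power_add del: power_Suc)
  also have "\<dots> = (if a = Min S then [:0, 1:] else 1) * min_count_sum (S - {a}) c"
    by (simp only: min_count_sum_def sum_distrib_left) simp
  finally show ?thesis .
qed

lemma binary_min_root_partsD:
  assumes "(U, l, r) \<in> binary_min_root_parts b"
  shows "set_tree l = U" and "min_count (Node l (Min S) r) = Suc (min_count l + min_count r)"
proof -
  have parts: "set_tree l = U" "set_tree r = S - {Min S} - U" "distinct (inorder l)" "distinct (inorder r)"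
    "U \<subseteq> S - {Min S} - {Max S}"
    using assms by (auto simp: HR_tilde_on_def)
  thus "set_tree l = U"
    by simp
  have "distinct (inorder (Node l (Min S) r))" "set_tree (Node l (Min S) r) = S" "r \<noteq> Leaf"
    using parts Min_in_S Max_in_S Min_less_Max_S by auto
  thus "min_count (Node l (Min S) r) = Suc (min_count l + min_count r)"
    by (simp add: min_count_Node_right_child)
qed

lemma sum_binary_Min_root:
  "(\<Sum>t \<in> (\<lambda>(U, l, r). Node l (Min S) r) ` binary_min_root_parts b. [:0, 1:] ^ min_count t)
    = [:0, 1:] * (\<Sum>U | U \<subseteq> S - {Min S} - {Max S} \<and> U \<noteq> {}.
                    min_count_sum U b * min_count_sum (S - {Min S} - U) (b \<noteq> even (card U)))"
proof -
  let ?X = "[:0, 1:] :: int poly"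
  have "inj_on (\<lambda>(U, l, r). Node l (Min S) r) (binary_min_root_parts b)"
  proof (rule inj_onI)
    fix x y assume "x \<in> binary_min_root_parts b" "y \<in> binary_min_root_parts b"
      and "(\<lambda>(U, l, r). Node l (Min S) r) x = (\<lambda>(U, l, r). Node l (Min S) r) y"
    moreover obtain U l r U' l' r' where "x = (U, l, r)" "y = (U', l', r')"
      by (cases x, cases y)
    ultimately show "x = y"
      using binary_min_root_partsD(1)[of U l r b] binary_min_root_partsD(1)[of U' l' r' b] by auto
  qed
  hence "(\<Sum>t \<in> (\<lambda>(U, l, r). Node l (Min S) r) ` binary_min_root_parts b. ?X ^ min_count t)
      = (\<Sum>(U, l, r) \<in> binary_min_root_parts b. ?X ^ min_count (Node l (Min S) r))"
    by (simp add: sum.reindex case_prod_unfold)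
  also have "\<dots> = (\<Sum>(U, l, r) \<in> binary_min_root_parts b. ?X * (?X ^ min_count l * ?X ^ min_count r))"
  proof (rule sum.cong[OF refl])
    fix x assume "x \<in> binary_min_root_parts b"
    moreover obtain U l r where "x = (U, l, r)"
      by (cases x)
    ultimately show "(case x of (U, l, r) \<Rightarrow> ?X ^ min_count (Node l (Min S) r))
        = (case x of (U, l, r) \<Rightarrow> ?X * (?X ^ min_count l * ?X ^ min_count r))"
      using binary_min_root_partsD(2)[of U l r b] by (simp add: power_add)
  qed
  also have "\<dots> = ?X * (\<Sum>U | U \<subseteq> S - {Min S} - {Max S} \<and> U \<noteq> {}.
      \<Sum>(l, r) \<in> HR_tilde_on U b \<times> HR_tilde_on (S - {Min S} - U) (b \<noteq> even (card U)).
        ?X ^ min_count l * ?X ^ min_count r)"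
  proof -
    have "finite (HR_tilde_on U b \<times> HR_tilde_on (S - {Min S} - U) c)" if "U \<subseteq> S" for U c
      using finite_S that by (auto intro!: finite_cartesian_product finite_HR_tilde_on intro: finite_subset)
    thus ?thesis
      using finite_S by (subst sum.Sigma) (auto simp: sum_distrib_left case_prod_unfold)
  qed
  also have "\<dots> = ?X * (\<Sum>U | U \<subseteq> S - {Min S} - {Max S} \<and> U \<noteq> {}.
                    min_count_sum U b * min_count_sum (S - {Min S} - U) (b \<noteq> even (card U)))"
    by (simp add: min_count_sum_def sum_product sum.cartesian_product case_prod_unfold)
  finally show ?thesis .
qed

lemma min_count_sum_rec:
  "min_count_sum S b = min_count_sum (S - {Max S}) (\<not> b)
    + (if b then [:0, 1:] * min_count_sum (S - {Min S}) False else 0)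
    + [:0, 1:] * (\<Sum>U | U \<subseteq> S - {Min S} - {Max S} \<and> U \<noteq> {}.
                    min_count_sum U b * min_count_sum (S - {Min S} - U) (b \<noteq> even (card U)))"
proof -
  let ?f = "\<lambda>t. [:0, 1:] ^ min_count t :: int poly"
  let ?A1 = "Node Leaf (Max S) ` HR_tilde_on (S - {Max S}) (\<not> b)"
  let ?A2 = "if b then Node Leaf (Min S) ` HR_tilde_on (S - {Min S}) False else {}"
  let ?A3 = "(\<lambda>(U, l, r). Node l (Min S) r) ` binary_min_root_parts b"
  have "finite (?A1 \<union> ?A2 \<union> ?A3)"
    using finite_HR_tilde_on[OF finite_S, of b] by (simp only: HR_tilde_on_decomp)
  moreover have "?A1 \<inter> ?A2 = {}" "(?A1 \<union> ?A2) \<inter> ?A3 = {}"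
    using Min_less_Max_S by (auto simp: HR_tilde_on_def)
  ultimately have "min_count_sum S b = sum ?f ?A1 + sum ?f ?A2 + sum ?f ?A3"
    unfolding min_count_sum_def HR_tilde_on_decomp[of b] by (simp add: sum.union_disjoint)
  moreover have "sum ?f ?A1 = min_count_sum (S - {Max S}) (\<not> b)"
    using sum_Node_Leaf_root[OF Max_in_S] Min_less_Max_S by simp
  moreover have "sum ?f ?A2 = (if b then [:0, 1:] * min_count_sum (S - {Min S}) False else 0)"
    using sum_Node_Leaf_root[OF Min_in_S] by simp
  ultimately show ?thesis
    using sum_binary_Min_root by simp
qed

end

lemma min_count_sum_eq_hr_poly: "finite S \<Longrightarrow> min_count_sum S b = hr_poly (card S) b"
proof (induction S arbitrary: b rule: card_ge_2_induct)
  case (singleton a)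
  thus ?case
    by (simp add: min_count_sum_def HR_tilde_on_singleton min_count_Node is_inner_def)
next
  case (card_ge_2 S)
  define T where "T = S - {Min S}"
  obtain n where n: "card S = Suc (Suc n)"
    using card_ge_2.hyps(2) by (metis add_2_eq_Suc le_Suc_ex)
  have T: "Max S \<in> T" "card T = Suc n" "T \<subset> S" "S - {Max S} \<subset> S"
    using Min_Max_mem[OF card_ge_2.hyps(1,2)] card_ge_2.hyps(1) n by (auto simp: T_def)
  have IH: "min_count_sum U c = hr_poly (card U) c" if "U \<subseteq> T" for U c
    using card_ge_2.IH that T(3) by blast
  have "(\<Sum>U | U \<subseteq> T - {Max S} \<and> U \<noteq> {}. min_count_sum U b * min_count_sum (T - U) (b \<noteq> even (card U)))
      = (\<Sum>j=1..n. of_nat (n choose j) * (hr_poly j b * hr_poly (Suc n - j) (b \<noteq> even j)))"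
  proof (subst sum_nonempty_subsets_by_card)
    fix U assume "U \<subseteq> T - {Max S}"
    moreover have "finite T"
      using card_ge_2.hyps(1) by (simp add: T_def)
    ultimately have "U \<subseteq> T" "finite U"
      by (auto intro: finite_subset)
    thus "min_count_sum U b * min_count_sum (T - U) (b \<noteq> even (card U))
        = hr_poly (card U) b * hr_poly (Suc n - card U) (b \<noteq> even (card U))"
      using IH T(2) by (simp add: card_Diff_subset)
  qed (use card_ge_2.hyps(1) T(1,2) in \<open>auto simp: T_def\<close>)
  moreover have "min_count_sum (S - {Max S}) (\<not> b) = hr_poly (Suc n) (\<not> b)"
    using card_ge_2.IH[OF T(4)] T(1) card_ge_2.hyps(1) n by (simp add: T_def)
  moreover have "min_count_sum T False = hr_poly (Suc n) False"
    using IH[of T] T(2) by simp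
  ultimately show ?case
    using min_count_sum_rec[OF card_ge_2.hyps(1,2), of b] n by (simp add: T_def mult.assoc)
qed (simp add: min_count_sum_def HR_tilde_on_empty)

lemma M_eq_homogenize:
  assumes "2 \<le> n"
  shows "M n = 2 * [:0, 1:] * homogenize (hr_exp n False) (andre_poly n)"
proof -
  define e where "e = hr_exp n False"
  have l: "(n + 1) div 2 = Suc e"
    using assms by (simp add: e_def hr_exp_def)
  have "M n = 2 * (\<Sum>k=1..Suc e. smult (int (d n (k - 1))) ([:0, 1:] ^ k * [:1, 1:] ^ (Suc e - k)))"
    by (simp only: M_def Let_def l)
  also have "\<dots> = 2 * (\<Sum>i=0..e. smult (coeff (andre_poly n) i) ([:0, 1:] ^ Suc i * [:1, 1:] ^ (e - i)))"
    by (simp only: One_nat_def sum.shift_bounds_cl_Suc_ivl d_eq_coeff_andre_poly[OF assms]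
        diff_Suc_1 diff_Suc_Suc minus_nat.diff_0)
  also have "\<dots> = 2 * [:0, 1:] * homogenize e (andre_poly n)"
    by (simp add: homogenize_def sum_distrib_left atLeast0AtMost mult_ac)
  finally show ?thesis
    by (simp add: e_def)
qed

theorem mainTheorem7:
  fixes n :: nat
  assumes "n \<ge> 2"
  shows "M n = 2 * (\<Sum>T\<in>HR_tilde n. [:0, 1:] ^ (min_count T + 1))"
proof -
  have "M n = 2 * [:0, 1:] * hr_poly n False"
    by (simp add: M_eq_homogenize[OF assms] hr_poly_eq_homogenize)
  also have "hr_poly n False = min_count_sum {1..n} False"
    by (simp add: min_count_sum_eq_hr_poly)
  finally show ?thesis
    by (simp add: min_count_sum_def HR_tilde_eq_HR_tilde_on sum_distrib_left)
qed

end
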